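(* Let $\mathcal F$ be a family of nonempty subsets of $[r]$ with $[r]\in\mathcal F$. Then $\Delta_{\mathcal F}$ has dimension $r-1$, and its facets are in bijection with $\widehat{\mathcal F}\setminus\{[r]\}$: for each $G\in\widehat{\mathcal F}$ with $G\ne[r]$, the set of points of $\Delta_{\mathcal F}$ where $\sum_{i\in G}x_i=|\{F\in\mathcal F:F\subseteq G\}|$ is a facet, distinct $G$ give distinct facets, and every facet arises this way. In particular the inequality description of Proposition 3.12 restricted to $G\in\widehat{\mathcal F}$ is irredundant.
   Context: For $F\subseteq[r]$ nonempty, $\Delta_F=\operatorname{conv}\{e_i:i\in F\}\subseteq\mathbb R^r$, and $\Delta_{\mathcal F}=\sum_{F\in\mathcal F}\Delta_F$ (Minkowski sum). Proposition 3.12 states that $\Delta_{\mathcal F}=\{x\in\mathbb R^r_{\ge0}:\sum_i x_i=|\mathcal F|,\ \sum_{i\in G}x_i\ge|\{F\in\mathcal F:F\subseteq G\}|\ \forall G\in\widehat{\mathcal F}\}$. The building closure $\widehat{\mathcal F}$ is the smallest family of subsets of $[r]$ containing $\mathcal F$ and all singletons such that $F\cup F'\in\widehat{\mathcal F}$ whenever $F,F'\in\widehat{\mathcal F}$ and $F\cap F'\ne\emptyset$. *)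

theory Defs
  imports "HOL-Analysis.Analysis"
begin

text \<open>Convention: the ground set [r] is the finite type 'n (so r = CARD('n)),
  and R^r is real^'n. The standard basis vector e_i is axis i 1.\<close>

definition simplexF :: "'n::finite set \<Rightarrow> (real ^ 'n) set" where
  "simplexF F = convex hull {axis i 1 | i. i \<in> F}"

definition minkowski_simplex :: "'n::finite set set \<Rightarrow> (real ^ 'n) set" where
  "minkowski_simplex \<F> =
     {x. \<exists>p. (\<forall>F\<in>\<F>. p F \<in> simplexF F) \<and> x = (\<Sum>F\<in>\<F>. p F)}"

inductive_set building_closure :: "'a set set \<Rightarrow> 'a set set" for \<F> where
  base: "F \<in> \<F> \<Longrightarrow> F \<in> building_closure \<F>"
| single: "{i} \<in> building_closure \<F>"
| union: "\<lbrakk>F \<in> building_closure \<F>; F' \<in> building_closure \<F>; F \<inter> F' \<noteq> {}\<rbrakk>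
           \<Longrightarrow> F \<union> F' \<in> building_closure \<F>"

definition count_below :: "'a set set \<Rightarrow> 'a set \<Rightarrow> nat" where
  "count_below \<F> G = card {F\<in>\<F>. F \<subseteq> G}"

definition face_for :: "'n::finite set set \<Rightarrow> 'n set \<Rightarrow> (real ^ 'n) set" where
  "face_for \<F> G = {x \<in> minkowski_simplex \<F>. (\<Sum>i\<in>G. x $ i) = real (count_below \<F> G)}"

end

theory Submission
  imports Defs
begin

text \<open>
  A point x of the Minkowski sum is a sum of points p F of the simplices, and the excess of
  the inequality for G at x is the mass that the summands p F with F not contained in G put
  on G. So every inequality is valid, and x lies on the face of G iff those summands avoid G.
  Moving the mass of one summand within its allowed support shows that the face of G
  contains every direction e_i - e_j with i, j on the same side of G; inside G this uses that
  a member of the building closure is connected through the members of the family it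
  contains. Hence the face has dimension r - 2, and it is proper because the summand for
  [r] may put mass on G. Taking every summand to be the barycentre of its allowed support
  gives a point on the face of G0 that satisfies all other inequalities strictly; this
  yields injectivity and irredundancy. Conversely, a facet is the set of maximizers of a
  linear functional a. The summands of a maximizer avoid the set L of coordinates where a
  is not maximal, so the facet lies in the face of L, hence in the face of a maximal member
  of the building closure inside L, which is itself a facet.
\<close>

lemma sum_scaleR_axis_component:
  "(\<Sum>i\<in>A. c i *\<^sub>R axis i 1) $ k = (if k \<in> A then c k else (0::real))"
  by (simp add: axis_def if_distrib cong: if_cong)

lemma convex_hull_inj_image:
  fixes f :: "'a \<Rightarrow> 'b::real_vector"
  assumes "finite F" "inj_on f F"
  shows "convex hull (f ` F) = {y. \<exists>u. (\<forall>i\<in>F. 0 \<le> u i) \<and> sum u F = 1 \<and> y = (\<Sum>i\<in>F. u i *\<^sub>R f i)}"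
  unfolding convex_hull_finite[OF finite_imageI[OF assms(1)]]
proof (intro Collect_cong iffI; elim exE conjE)
  fix y u assume "\<forall>v\<in>f ` F. 0 \<le> u v" "sum u (f ` F) = 1" "(\<Sum>v\<in>f ` F. u v *\<^sub>R v) = y"
  then show "\<exists>u. (\<forall>i\<in>F. 0 \<le> u i) \<and> sum u F = 1 \<and> y = (\<Sum>i\<in>F. u i *\<^sub>R f i)"
    by (intro exI[of _ "u \<circ> f"]) (auto simp: sum.reindex[OF assms(2)])
next
  fix y u assume "\<forall>i\<in>F. 0 \<le> u i" "sum u F = 1" "y = (\<Sum>i\<in>F. u i *\<^sub>R f i)"
  then show "\<exists>u. (\<forall>v\<in>f ` F. 0 \<le> u v) \<and> sum u (f ` F) = 1 \<and> (\<Sum>v\<in>f ` F. u v *\<^sub>R v) = y"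
    by (intro exI[of _ "u \<circ> inv_into F f"])
      (auto simp: sum.reindex[OF assms(2)] inv_into_f_f[OF assms(2)])
qed

lemma simplexF_iff:
  "x \<in> simplexF F \<longleftrightarrow> (\<forall>i. 0 \<le> x $ i) \<and> (\<forall>i. i \<notin> F \<longrightarrow> x $ i = 0) \<and> (\<Sum>i\<in>UNIV. x $ i) = 1"
proof -
  have "inj_on (\<lambda>i. axis i 1 :: real^'a) F"
    by (auto simp: inj_on_def axis_eq_axis)
  then have "x \<in> simplexF F \<longleftrightarrow>
      (\<exists>u. (\<forall>i\<in>F. 0 \<le> u i) \<and> sum u F = 1 \<and> x = (\<Sum>i\<in>F. u i *\<^sub>R axis i 1))"
    unfolding simplexF_def setcompr_eq_image by (simp add: convex_hull_inj_image)
  also have "\<dots> \<longleftrightarrow> (\<forall>i. 0 \<le> x $ i) \<and> (\<forall>i. i \<notin> F \<longrightarrow> x $ i = 0) \<and> (\<Sum>i\<in>UNIV. x $ i) = 1"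
  proof
    assume "\<exists>u. (\<forall>i\<in>F. 0 \<le> u i) \<and> sum u F = 1 \<and> x = (\<Sum>i\<in>F. u i *\<^sub>R axis i 1)"
    then obtain u where u: "\<forall>i\<in>F. 0 \<le> u i" "sum u F = 1" and "x = (\<Sum>i\<in>F. u i *\<^sub>R axis i 1)"
      by blast
    then have "x $ k = (if k \<in> F then u k else 0)" for k
      by (simp only: sum_scaleR_axis_component)
    with u show "(\<forall>i. 0 \<le> x $ i) \<and> (\<forall>i. i \<notin> F \<longrightarrow> x $ i = 0) \<and> (\<Sum>i\<in>UNIV. x $ i) = 1"
      by (simp add: sum.If_cases)
  next
    assume x: "(\<forall>i. 0 \<le> x $ i) \<and> (\<forall>i. i \<notin> F \<longrightarrow> x $ i = 0) \<and> (\<Sum>i\<in>UNIV. x $ i) = 1"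
    then have "(\<Sum>i\<in>F. x $ i) = 1"
      by (metis (mono_tags) sum.mono_neutral_left finite subset_UNIV DiffD2)
    moreover have "x = (\<Sum>i\<in>F. x $ i *\<^sub>R axis i 1)"
      unfolding vec_eq_iff sum_scaleR_axis_component using x by auto
    ultimately show "\<exists>u. (\<forall>i\<in>F. 0 \<le> u i) \<and> sum u F = 1 \<and> x = (\<Sum>i\<in>F. u i *\<^sub>R axis i 1)"
      using x by blast
  qed
  finally show ?thesis .
qed

lemma axis_in_simplexF_iff: "axis i 1 \<in> simplexF F \<longleftrightarrow> i \<in> F"
  by (auto simp: simplexF_iff axis_def)

lemma simplexF_nonneg: "x \<in> simplexF F \<Longrightarrow> 0 \<le> x $ i"
  by (simp add: simplexF_iff)

lemma simplexF_mono: "A \<subseteq> F \<Longrightarrow> simplexF A \<subseteq> simplexF F"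
  unfolding simplexF_def by (rule hull_mono) blast

lemma sum_simplexF_superset:
  assumes "x \<in> simplexF F" "F \<subseteq> H"
  shows "(\<Sum>i\<in>H. x $ i) = 1"
proof -
  have "(\<Sum>i\<in>H. x $ i) = (\<Sum>i\<in>UNIV. x $ i)"
    using assms by (intro sum.mono_neutral_left) (auto simp: simplexF_iff)
  then show ?thesis
    using assms(1) by (simp add: simplexF_iff)
qed

definition barycentre :: "'n::finite set \<Rightarrow> real^'n" where
  "barycentre A = (\<chi> i. if i \<in> A then 1 / real (card A) else 0)"

lemma barycentre_in_simplexF:
  assumes "A \<noteq> {}" "A \<subseteq> F"
  shows "barycentre A \<in> simplexF F"
proof -
  have "(\<Sum>i\<in>UNIV. barycentre A $ i) = (\<Sum>i\<in>A. 1 / real (card A))"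
    by (simp add: barycentre_def sum.If_cases)
  also have "\<dots> = 1"
    using assms(1) by simp
  finally show ?thesis
    using assms(2) by (auto simp: simplexF_iff barycentre_def)
qed

lemma inverse_card_le_sum_barycentre:
  fixes A :: "'n::finite set"
  assumes "k \<in> A" "k \<in> H"
  shows "1 / real CARD('n) \<le> (\<Sum>i\<in>H. barycentre A $ i :: real)"
proof -
  have "1 / real CARD('n) \<le> 1 / real (card A)"
  proof -
    have "0 < card A"
      using assms(1) by (auto simp: card_gt_0_iff)
    moreover have "card A \<le> CARD('n)"
      by (rule card_mono) auto
    ultimately show ?thesis
      by (simp add: frac_le)
  qed
  also have "\<dots> = barycentre A $ k"
    using assms(1) by (simp add: barycentre_def)
  also have "\<dots> \<le> (\<Sum>i\<in>H. barycentre A $ i)"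
    using assms(2) by (intro member_le_sum) (auto simp: barycentre_def)
  finally show ?thesis .
qed

lemma sum_in_minkowski_simplex:
  "\<forall>F\<in>\<F>. p F \<in> simplexF F \<Longrightarrow> (\<Sum>F\<in>\<F>. p F) \<in> minkowski_simplex \<F>"
  by (auto simp: minkowski_simplex_def)

lemma minkowski_simplexE:
  assumes "x \<in> minkowski_simplex \<F>"
  obtains p where "\<forall>F\<in>\<F>. p F \<in> simplexF F" "x = (\<Sum>F\<in>\<F>. p F)"
  using assms by (auto simp: minkowski_simplex_def)

lemma sum_components_sum_simplexF:
  fixes \<F> :: "'n::finite set set"
  assumes "\<forall>F\<in>\<F>. p F \<in> simplexF F"
  shows "(\<Sum>i\<in>H. (\<Sum>F\<in>\<F>. p F) $ i) =
    real (count_below \<F> H) + (\<Sum>F\<in>{F\<in>\<F>. \<not> F \<subseteq> H}. \<Sum>i\<in>H. p F $ i)"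
proof -
  have "(\<Sum>i\<in>H. (\<Sum>F\<in>\<F>. p F) $ i) = (\<Sum>F\<in>\<F>. \<Sum>i\<in>H. p F $ i)"
    by (simp add: sum.swap[of _ H])
  also have "\<dots> = (\<Sum>F\<in>{F\<in>\<F>. F \<subseteq> H}. \<Sum>i\<in>H. p F $ i) + (\<Sum>F\<in>{F\<in>\<F>. \<not> F \<subseteq> H}. \<Sum>i\<in>H. p F $ i)"
    by (subst sum.union_disjoint[symmetric]) (auto intro: sum.cong)
  also have "(\<Sum>F\<in>{F\<in>\<F>. F \<subseteq> H}. \<Sum>i\<in>H. p F $ i) = (\<Sum>F\<in>{F\<in>\<F>. F \<subseteq> H}. 1)"
    using assms by (intro sum.cong) (auto intro: sum_simplexF_superset)
  also have "\<dots> = real (count_below \<F> H)"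
    by (simp add: count_below_def)
  finally show ?thesis .
qed

lemma count_below_le_sum_components:
  fixes \<F> :: "'n::finite set set"
  assumes "x \<in> minkowski_simplex \<F>"
  shows "real (count_below \<F> H) \<le> (\<Sum>i\<in>H. x $ i)"
proof -
  obtain p where p: "\<forall>F\<in>\<F>. p F \<in> simplexF F" and x: "x = (\<Sum>F\<in>\<F>. p F)"
    using assms by (rule minkowski_simplexE)
  have "0 \<le> (\<Sum>F\<in>{F\<in>\<F>. \<not> F \<subseteq> H}. \<Sum>i\<in>H. p F $ i)"
    using p by (intro sum_nonneg) (auto intro: simplexF_nonneg)
  then show ?thesis
    unfolding x sum_components_sum_simplexF[OF p] by simp
qed

lemma sum_components_minkowski_simplex:
  fixes \<F> :: "'n::finite set set"
  assumes "x \<in> minkowski_simplex \<F>"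
  shows "(\<Sum>i\<in>UNIV. x $ i) = real (card \<F>)"
proof -
  obtain p where p: "\<forall>F\<in>\<F>. p F \<in> simplexF F" and x: "x = (\<Sum>F\<in>\<F>. p F)"
    using assms by (rule minkowski_simplexE)
  show ?thesis
    unfolding x sum_components_sum_simplexF[OF p] by (simp add: count_below_def)
qed

lemma count_below_add_le_sum_components:
  fixes \<F> :: "'n::finite set set"
  assumes p: "\<forall>F\<in>\<F>. p F \<in> simplexF F" and "F0 \<in> \<F>" "\<not> F0 \<subseteq> H"
  shows "real (count_below \<F> H) + (\<Sum>i\<in>H. p F0 $ i) \<le> (\<Sum>i\<in>H. (\<Sum>F\<in>\<F>. p F) $ i)"
proof -
  have "(\<Sum>i\<in>H. p F0 $ i) \<le> (\<Sum>F\<in>{F\<in>\<F>. \<not> F \<subseteq> H}. \<Sum>i\<in>H. p F $ i)"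
    using assms by (intro member_le_sum sum_nonneg) (auto intro: simplexF_nonneg)
  then show ?thesis
    unfolding sum_components_sum_simplexF[OF p] by simp
qed

lemma polytope_minkowski_simplex: "polytope (minkowski_simplex \<F>)"
proof -
  have "minkowski_simplex \<F> = (\<Sum>F\<in>\<F>. simplexF F)"
    unfolding set_sum_alt[OF finite] minkowski_simplex_def by auto
  also have "\<dots> = convex hull (\<Sum>F\<in>\<F>. {axis i 1 | i. i \<in> F})"
    by (simp add: simplexF_def convex_hull_set_sum)
  finally have eq: "minkowski_simplex \<F> = convex hull (\<Sum>F\<in>\<F>. {axis i (1::real) | i. i \<in> F})" .
  have "finite (\<Sum>F\<in>\<F>. {axis i (1::real) | i. i \<in> F})"
    by (induction \<F> rule: infinite_finite_induct) (auto intro: finite_set_plus)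
  then show ?thesis
    unfolding eq polytope_def by blast
qed

lemma convex_minkowski_simplex: "convex (minkowski_simplex \<F>)"
  by (simp add: polytope_minkowski_simplex polytope_imp_convex)

definition indicator_vector :: "'n::finite set \<Rightarrow> real^'n" where
  "indicator_vector G = (\<chi> i. if i \<in> G then 1 else 0)"

lemma inner_indicator_vector: "indicator_vector G \<bullet> x = (\<Sum>i\<in>G. x $ i)"
proof -
  have "indicator_vector G \<bullet> x = (\<Sum>i\<in>UNIV. if i \<in> G then x $ i else 0)"
    unfolding indicator_vector_def inner_vec_def by (intro sum.cong) auto
  also have "\<dots> = (\<Sum>i\<in>G. x $ i)"
    by (simp add: sum.If_cases)
  finally show ?thesis .
qed

lemma indicator_vector_nonzero:
  assumes "G \<noteq> {}"
  shows "indicator_vector G \<noteq> 0"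
proof -
  obtain i where "i \<in> G"
    using assms by blast
  then have "indicator_vector G $ i = 1"
    by (simp add: indicator_vector_def)
  then show ?thesis
    by (metis zero_index zero_neq_one)
qed

lemma face_for_face_of: "face_for \<F> G face_of minkowski_simplex \<F>"
proof -
  have "face_for \<F> G =
      minkowski_simplex \<F> \<inter> {x. indicator_vector G \<bullet> x = real (count_below \<F> G)}"
    by (auto simp: face_for_def inner_indicator_vector)
  also have "\<dots> face_of minkowski_simplex \<F>"
    by (intro face_of_Int_supporting_hyperplane_ge convex_minkowski_simplex)
      (simp add: inner_indicator_vector count_below_le_sum_components)
  finally show ?thesis .
qed

lemma face_for_empty:
  assumes "\<forall>F\<in>\<F>. F \<noteq> {}"
  shows "face_for \<F> {} = minkowski_simplex \<F>"
proof -
  have "count_below \<F> {} = 0"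
    using assms by (auto simp: count_below_def)
  then show ?thesis
    by (auto simp: face_for_def)
qed

text \<open>The set on which the summand for F of a point on the face of G may put its mass.\<close>

definition face_support :: "'a set \<Rightarrow> 'a set \<Rightarrow> 'a set" where
  "face_support G F = (if F \<subseteq> G then F else F - G)"

lemma face_support_subset: "face_support G F \<subseteq> F"
  by (auto simp: face_support_def)

lemma face_support_nonempty: "F \<noteq> {} \<Longrightarrow> face_support G F \<noteq> {}"
  by (auto simp: face_support_def)

lemma sum_in_face_for:
  fixes \<F> :: "'n::finite set set"
  assumes p: "\<forall>F\<in>\<F>. p F \<in> simplexF (face_support G F)"
  shows "(\<Sum>F\<in>\<F>. p F) \<in> face_for \<F> G"
proof -
  have p': "\<forall>F\<in>\<F>. p F \<in> simplexF F"
    using p simplexF_mono[OF face_support_subset] by blast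
  have "(\<Sum>F\<in>{F\<in>\<F>. \<not> F \<subseteq> G}. \<Sum>i\<in>G. p F $ i) = 0"
    using p by (intro sum.neutral ballI) (auto simp: simplexF_iff face_support_def)
  then have "(\<Sum>i\<in>G. (\<Sum>F\<in>\<F>. p F) $ i) = real (count_below \<F> G)"
    unfolding sum_components_sum_simplexF[OF p'] by simp
  with p' show ?thesis
    unfolding face_for_def by (simp add: sum_in_minkowski_simplex)
qed

definition face_centre :: "'n::finite set set \<Rightarrow> 'n set \<Rightarrow> real^'n" where
  "face_centre \<F> G = (\<Sum>F\<in>\<F>. barycentre (face_support G F))"

lemma barycentre_face_support_in_simplexF:
  "F \<noteq> {} \<Longrightarrow> barycentre (face_support G F) \<in> simplexF (face_support G F)"
  by (simp add: barycentre_in_simplexF face_support_nonempty)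

lemma face_centre_in_face_for:
  "\<forall>F\<in>\<F>. F \<noteq> {} \<Longrightarrow> face_centre \<F> G \<in> face_for \<F> G"
  unfolding face_centre_def
  by (intro sum_in_face_for) (simp add: barycentre_face_support_in_simplexF)

lemma building_closure_nonempty:
  assumes "\<forall>F\<in>\<F>. F \<noteq> {}" "G \<in> building_closure \<F>"
  shows "G \<noteq> {}"
  using assms(2) by induction (use assms(1) in auto)

lemma building_closure_Union:
  assumes "finite \<H>" "\<H> \<noteq> {}" "\<forall>H\<in>\<H>. H \<in> building_closure \<F> \<and> c \<in> H"
  shows "\<Union>\<H> \<in> building_closure \<F>"
  using assms
proof (induction rule: finite_ne_induct)
  case (singleton H)
  then show ?case by simp
next
  case (insert H \<H>)
  then have "H \<union> \<Union>\<H> \<in> building_closure \<F>"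
    by (intro building_closure.union) auto
  then show ?case by simp
qed

lemma building_closure_connected:
  assumes "H \<in> building_closure \<F>" "G \<subseteq> H" "G \<noteq> {}" "G \<noteq> H"
  shows "\<exists>F\<in>\<F>. F \<subseteq> H \<and> F \<inter> G \<noteq> {} \<and> \<not> F \<subseteq> G"
  using assms
proof (induction arbitrary: G)
  case (base F)
  then show ?case by blast
next
  case (single i)
  then show ?case by blast
next
  case (union A B)
  show ?case
  proof (cases "G \<inter> A \<noteq> {} \<and> \<not> A \<subseteq> G")
    case True
    then obtain F where "F \<in> \<F>" "F \<subseteq> A" "F \<inter> (G \<inter> A) \<noteq> {}" "\<not> F \<subseteq> G \<inter> A"
      using union.IH(1)[of "G \<inter> A"] by blast
    then show ?thesis by blast
  next
    case False
    then have "G \<inter> B \<noteq> {} \<and> \<not> B \<subseteq> G"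
      using union.prems union.hyps(3) by blast
    then obtain F where "F \<in> \<F>" "F \<subseteq> B" "F \<inter> (G \<inter> B) \<noteq> {}" "\<not> F \<subseteq> G \<inter> B"
      using union.IH(2)[of "G \<inter> B"] by blast
    then show ?thesis by blast
  qed
qed

lemma building_closure_member_related:
  assumes "reflp R" "transp R"
    and related: "\<And>F k l. F \<in> \<F> \<Longrightarrow> F \<subseteq> G \<Longrightarrow> k \<in> F \<Longrightarrow> l \<in> F \<Longrightarrow> R k l"
    and "H \<in> building_closure \<F>" "H \<subseteq> G" "i \<in> H" "j \<in> H"
  shows "R i j"
  using assms(4-)
proof (induction arbitrary: i j)
  case (base F)
  then show ?case by (rule related)
next
  case (single k)
  then show ?case using \<open>reflp R\<close> by (simp add: reflpD)
next
  case (union A B)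
  obtain c where "c \<in> A" "c \<in> B"
    using union.hyps(3) by blast
  with union have "R i c" "R c j" by auto
  with \<open>transp R\<close> show ?case by (rule transpD)
qed

lemma dim_hyperplane_ge:
  fixes a :: "'a::euclidean_space"
  shows "DIM('a) - 1 \<le> dim {x. a \<bullet> x = 0}"
proof (cases "a = 0")
  case True
  then show ?thesis by simp
next
  case False
  then show ?thesis by (simp add: dim_hyperplane)
qed

lemma dim_Int_hyperplanes_ge:
  fixes a b :: "'a::euclidean_space"
  shows "int DIM('a) - 2 \<le> int (dim ({x. a \<bullet> x = 0} \<inter> {x. b \<bullet> x = 0}))"
proof -
  have "dim {x + y |x y. x \<in> {x. a \<bullet> x = 0} \<and> y \<in> {x. b \<bullet> x = 0}}
      + dim ({x. a \<bullet> x = 0} \<inter> {x. b \<bullet> x = 0}) = dim {x. a \<bullet> x = 0} + dim {x. b \<bullet> x = 0}"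
    by (intro dim_sums_Int subspace_hyperplane)
  moreover have "dim {x + y |x y. x \<in> {x. a \<bullet> x = 0} \<and> y \<in> {x. b \<bullet> x = 0}} \<le> DIM('a)"
    by (rule dim_subset_UNIV)
  moreover have "DIM('a) - 1 \<le> dim {x. a \<bullet> x = 0}" "DIM('a) - 1 \<le> dim {x. b \<bullet> x = 0}"
    by (rule dim_hyperplane_ge)+
  ultimately show ?thesis
    using DIM_positive[where 'a='a] by linarith
qed

lemma in_subspace_if_axis_differences:
  fixes v :: "real^'n::finite"
  assumes "subspace D"
    and same_side: "\<And>i j. (i \<in> G \<longleftrightarrow> j \<in> G) \<Longrightarrow> axis i 1 - axis j 1 \<in> D"
    and "(\<Sum>i\<in>UNIV. v $ i) = 0" "(\<Sum>i\<in>G. v $ i) = 0"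
  shows "v \<in> D"
proof -
  have "(\<Sum>i\<in>-G. v $ i) = 0"
    using assms(3,4) sum.subset_diff[of G UNIV "($) v"] by (simp add: Compl_eq_Diff_UNIV)
  then have shift: "(\<Sum>i\<in>A. v $ i *\<^sub>R (axis i 1 - axis j 1)) = (\<Sum>i\<in>A. v $ i *\<^sub>R axis i 1)"
    if "A = G \<or> A = -G" for A and j :: 'n
    using that assms(4)
    by (auto simp: scaleR_diff_right sum_subtractf simp flip: scaleR_sum_left)
  define g where "g = (SOME g. g \<in> G)"
  define h where "h = (SOME h. h \<notin> G)"
  have "v = (\<Sum>i\<in>G. v $ i *\<^sub>R axis i 1) + (\<Sum>i\<in>-G. v $ i *\<^sub>R axis i 1)"
    unfolding vec_eq_iff vector_add_component sum_scaleR_axis_component by simp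
  also have "\<dots> = (\<Sum>i\<in>G. v $ i *\<^sub>R (axis i 1 - axis g 1)) + (\<Sum>i\<in>-G. v $ i *\<^sub>R (axis i 1 - axis h 1))"
    by (simp add: shift)
  also have "\<dots> \<in> D"
  proof (intro subspace_add subspace_sum subspace_scale \<open>subspace D\<close>)
    fix i assume "i \<in> G"
    then have "g \<in> G" unfolding g_def by (rule someI)
    with \<open>i \<in> G\<close> show "axis i 1 - axis g 1 \<in> D" by (intro same_side) simp
  next
    fix i assume "i \<in> -G"
    then have "h \<notin> G" unfolding h_def by (metis ComplD someI)
    with \<open>i \<in> -G\<close> show "axis i 1 - axis h 1 \<in> D" by (intro same_side) simp
  qed
  finally show ?thesis .
qed

lemma sum_update_diff:
  fixes p :: "'a \<Rightarrow> 'b::ab_group_add"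
  assumes "finite A" "U \<in> A"
  shows "(\<Sum>F\<in>A. (p(U := u)) F) - (\<Sum>F\<in>A. p F) = u - p U"
  using assms by (simp add: sum.remove)

lemma reflp_diff_in_subspace: "subspace D \<Longrightarrow> reflp (\<lambda>k l. f k - f l \<in> D)"
  by (simp add: reflp_def subspace_0)

lemma transp_diff_in_subspace: "subspace D \<Longrightarrow> transp (\<lambda>k l. f k - f l \<in> D)"
  unfolding transp_def by (metis diff_add_cancel add_diff_eq subspace_add)

lemma axis_diff_in_face_for_directions:
  fixes \<F> :: "'n::finite set set"
  assumes nonempty: "\<forall>F\<in>\<F>. F \<noteq> {}"
    and U: "U \<in> \<F>" "u \<in> face_support G U" "w \<in> face_support G U"
  shows "axis u 1 - axis w 1 \<in> span ((\<lambda>x. x - face_centre \<F> G) ` face_for \<F> G)"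
    (is "_ \<in> ?D")
proof -
  let ?p = "\<lambda>F. barycentre (face_support G F)"
  have "(\<Sum>F\<in>\<F>. (?p(U := axis t 1)) F) \<in> face_for \<F> G" if "t \<in> face_support G U" for t
    using that nonempty
    by (intro sum_in_face_for) (simp add: axis_in_simplexF_iff barycentre_face_support_in_simplexF)
  then have "(\<Sum>F\<in>\<F>. (?p(U := axis t 1)) F) - face_centre \<F> G \<in> ?D" if "t \<in> face_support G U" for t
    using that by (intro span_base) blast
  then have shifted: "axis t 1 - ?p U \<in> ?D" if "t \<in> face_support G U" for t
    using that unfolding face_centre_def sum_update_diff[OF finite U(1)] .
  have "(axis u 1 - ?p U) - (axis w 1 - ?p U) \<in> ?D"
    by (rule span_diff[OF shifted shifted]) (fact U)+
  then show ?thesis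
    by simp
qed

lemma axis_diff_in_face_for_directions_same_side:
  fixes \<F> :: "'n::finite set set"
  assumes nonempty: "\<forall>F\<in>\<F>. F \<noteq> {}" and full: "UNIV \<in> \<F>" and "G \<noteq> UNIV"
    and connected: "\<And>i j. i \<in> G \<Longrightarrow> j \<in> G \<Longrightarrow> \<exists>H\<in>building_closure \<F>. H \<subseteq> G \<and> i \<in> H \<and> j \<in> H"
    and "i \<in> G \<longleftrightarrow> j \<in> G"
  shows "axis i 1 - axis j 1 \<in> span ((\<lambda>x. x - face_centre \<F> G) ` face_for \<F> G)"
    (is "_ \<in> ?D")
proof (cases "i \<in> G")
  case False
  then have "i \<in> face_support G UNIV" "j \<in> face_support G UNIV"
    using assms(4,5) by (auto simp: face_support_def)
  then show ?thesis
    by (rule axis_diff_in_face_for_directions[OF nonempty full])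
next
  case True
  with assms(5) obtain H where H: "H \<in> building_closure \<F>" "H \<subseteq> G" "i \<in> H" "j \<in> H"
    using connected by blast
  show ?thesis
  proof (rule building_closure_member_related[where R = "\<lambda>k l. axis k 1 - axis l 1 \<in> ?D"])
    show "axis k 1 - axis l 1 \<in> ?D" if "F \<in> \<F>" "F \<subseteq> G" "k \<in> F" "l \<in> F" for F k l
      using that by (intro axis_diff_in_face_for_directions[OF nonempty]) (auto simp: face_support_def)
  qed (use H in \<open>auto intro: reflp_diff_in_subspace transp_diff_in_subspace\<close>)
qed

lemma aff_dim_face_for_ge:
  fixes \<F> :: "'n::finite set set"
  assumes nonempty: "\<forall>F\<in>\<F>. F \<noteq> {}" and full: "UNIV \<in> \<F>" and "G \<noteq> UNIV"
    and connected: "\<And>i j. i \<in> G \<Longrightarrow> j \<in> G \<Longrightarrow> \<exists>H\<in>building_closure \<F>. H \<subseteq> G \<and> i \<in> H \<and> j \<in> H"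
    \<comment> \<open>vacuous for \<open>G = {}\<close>, whose face is the whole polytope\<close>
  shows "int (dim ({v. indicator_vector UNIV \<bullet> v = 0} \<inter> {v. indicator_vector G \<bullet> v = 0}))
    \<le> aff_dim (face_for \<F> G)"
proof -
  let ?D = "span ((\<lambda>x. x - face_centre \<F> G) ` face_for \<F> G)"
  have "face_centre \<F> G \<in> face_for \<F> G"
    using nonempty by (rule face_centre_in_face_for)
  then have "aff_dim (face_for \<F> G) = int (dim ?D)"
    unfolding dim_span by (intro aff_dim_eq_dim_subtract) (simp add: hull_inc)
  moreover have "v \<in> ?D"
    if "v \<in> {v. indicator_vector UNIV \<bullet> v = 0} \<inter> {v. indicator_vector G \<bullet> v = 0}" for v
    using axis_diff_in_face_for_directions_same_side[OF assms]
    by (rule in_subspace_if_axis_differences[OF subspace_span])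
      (use that in \<open>auto simp: inner_indicator_vector\<close>)
  then have "dim ({v. indicator_vector UNIV \<bullet> v = 0} \<inter> {v. indicator_vector G \<bullet> v = 0}) \<le> dim ?D"
    by (intro dim_subset subsetI)
  ultimately show ?thesis
    by linarith
qed

lemma aff_dim_minkowski_simplex:
  fixes \<F> :: "'n::finite set set"
  assumes nonempty: "\<forall>F\<in>\<F>. F \<noteq> {}" and full: "UNIV \<in> \<F>"
  shows "aff_dim (minkowski_simplex \<F>) = int CARD('n) - 1"
proof (rule antisym)
  have "minkowski_simplex \<F> \<subseteq> {x. indicator_vector UNIV \<bullet> x = real (card \<F>)}"
    by (auto simp: inner_indicator_vector sum_components_minkowski_simplex)
  moreover have "aff_dim {x. indicator_vector (UNIV :: 'n set) \<bullet> x = real (card \<F>)} = int CARD('n) - 1"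
    using aff_dim_hyperplane[OF indicator_vector_nonzero[of "UNIV :: 'n set"]] by simp
  ultimately show "aff_dim (minkowski_simplex \<F>) \<le> int CARD('n) - 1"
    by (metis aff_dim_subset)
next
  have "int (dim ({v. indicator_vector (UNIV :: 'n set) \<bullet> v = 0} \<inter> {v. indicator_vector {} \<bullet> v = 0}))
      \<le> aff_dim (face_for \<F> {})"
    by (rule aff_dim_face_for_ge[OF nonempty full]) simp_all
  moreover have "{v. indicator_vector (UNIV :: 'n set) \<bullet> v = 0} \<inter> {v. indicator_vector {} \<bullet> v = 0}
      = {v. indicator_vector UNIV \<bullet> v = 0}"
    by (simp add: inner_indicator_vector)
  moreover have "dim {v. indicator_vector (UNIV :: 'n set) \<bullet> v = 0} = CARD('n) - 1"
    using dim_hyperplane[OF indicator_vector_nonzero[of "UNIV :: 'n set"]] by simp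
  moreover have "int (CARD('n) - 1) = int CARD('n) - 1"
    by (simp add: of_nat_diff Suc_le_eq)
  ultimately show "int CARD('n) - 1 \<le> aff_dim (minkowski_simplex \<F>)"
    using face_for_empty[OF nonempty] by simp
qed

lemma face_for_neq_minkowski_simplex:
  fixes \<F> :: "'n::finite set set"
  assumes nonempty: "\<forall>F\<in>\<F>. F \<noteq> {}" and full: "UNIV \<in> \<F>" and "G \<noteq> {}" "G \<noteq> UNIV"
  shows "face_for \<F> G \<noteq> minkowski_simplex \<F>"
proof -
  have p: "\<forall>F\<in>\<F>. barycentre F \<in> simplexF F"
    using nonempty by (simp add: barycentre_in_simplexF)
  obtain g where "g \<in> G"
    using \<open>G \<noteq> {}\<close> by blast
  have "0 < 1 / real CARD('n)"
    by simp
  also have "\<dots> \<le> (\<Sum>i\<in>G. barycentre UNIV $ i)"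
    using \<open>g \<in> G\<close> by (intro inverse_card_le_sum_barycentre) auto
  finally have "0 < (\<Sum>i\<in>G. barycentre UNIV $ i)" .
  moreover have "\<not> UNIV \<subseteq> G"
    using \<open>G \<noteq> UNIV\<close> by blast
  ultimately have "real (count_below \<F> G) < (\<Sum>i\<in>G. (\<Sum>F\<in>\<F>. barycentre F) $ i)"
    using count_below_add_le_sum_components[OF p full] by fastforce
  then have "(\<Sum>F\<in>\<F>. barycentre F) \<notin> face_for \<F> G"
    by (simp add: face_for_def)
  moreover have "(\<Sum>F\<in>\<F>. barycentre F) \<in> minkowski_simplex \<F>"
    using p by (rule sum_in_minkowski_simplex)
  ultimately show ?thesis
    by blast
qed

lemma face_for_facet_of:
  fixes \<F> :: "'n::finite set set"
  assumes nonempty: "\<forall>F\<in>\<F>. F \<noteq> {}" and full: "UNIV \<in> \<F>"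
    and G: "G \<in> building_closure \<F>" "G \<noteq> UNIV"
  shows "face_for \<F> G facet_of minkowski_simplex \<F>"
proof -
  have "int (dim ({v. indicator_vector UNIV \<bullet> v = 0} \<inter> {v. indicator_vector G \<bullet> v = 0}))
      \<le> aff_dim (face_for \<F> G)"
    using nonempty full G by (intro aff_dim_face_for_ge) auto
  then have lower: "int CARD('n) - 2 \<le> aff_dim (face_for \<F> G)"
    using dim_Int_hyperplanes_ge[of "indicator_vector UNIV" "indicator_vector G"] by simp
  have "face_for \<F> G \<noteq> minkowski_simplex \<F>"
    using building_closure_nonempty[OF nonempty G(1)] G(2)
    by (intro face_for_neq_minkowski_simplex[OF nonempty full])
  then have "aff_dim (face_for \<F> G) < aff_dim (minkowski_simplex \<F>)"
    by (intro face_of_aff_dim_lt convex_minkowski_simplex face_for_face_of)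
  then show ?thesis
    unfolding facet_of_def aff_dim_minkowski_simplex[OF nonempty full]
    using face_for_face_of face_centre_in_face_for[OF nonempty] lower by fastforce
qed

lemma sum_face_centre_ge:
  fixes \<F> :: "'n::finite set set"
  assumes nonempty: "\<forall>F\<in>\<F>. F \<noteq> {}" and full: "UNIV \<in> \<F>"
    and G0: "G0 \<in> building_closure \<F>" "G0 \<noteq> UNIV"
    and G: "G \<noteq> {}" "G \<noteq> UNIV" "G \<noteq> G0"
  shows "real (count_below \<F> G) + 1 / real CARD('n) \<le> (\<Sum>i\<in>G. face_centre \<F> G0 $ i)"
proof -
  obtain F k where F: "F \<in> \<F>" "\<not> F \<subseteq> G" "k \<in> face_support G0 F" "k \<in> G"
  proof (cases "G \<subseteq> G0")
    case True
    then obtain F where "F \<in> \<F>" "F \<subseteq> G0" "F \<inter> G \<noteq> {}" "\<not> F \<subseteq> G"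
      using building_closure_connected[OF G0(1) True G(1,3)] by blast
    then show ?thesis
      using that[of F] by (auto simp: face_support_def)
  next
    case False
    then obtain k where "k \<in> G" "k \<notin> G0"
      by blast
    moreover have "face_support G0 UNIV = - G0"
      using G0(2) by (auto simp: face_support_def)
    moreover have "\<not> UNIV \<subseteq> G"
      using G(2) by blast
    ultimately show ?thesis
      using that[OF full] by blast
  qed
  have "\<forall>F\<in>\<F>. barycentre (face_support G0 F) \<in> simplexF F"
    using nonempty barycentre_face_support_in_simplexF simplexF_mono[OF face_support_subset] by blast
  from count_below_add_le_sum_components[OF this F(1,2)] inverse_card_le_sum_barycentre[OF F(3,4)]
  show ?thesis
    unfolding face_centre_def by linarith
qed

lemma inj_on_face_for:
  fixes \<F> :: "'n::finite set set"
  assumes nonempty: "\<forall>F\<in>\<F>. F \<noteq> {}" and full: "UNIV \<in> \<F>"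
  shows "inj_on (face_for \<F>) (building_closure \<F> - {UNIV})"
proof (rule inj_onI, rule ccontr)
  fix G G'
  assume G: "G \<in> building_closure \<F> - {UNIV}" and G': "G' \<in> building_closure \<F> - {UNIV}"
    and eq: "face_for \<F> G = face_for \<F> G'" and "G \<noteq> G'"
  have "face_centre \<F> G \<in> face_for \<F> G'"
    using eq face_centre_in_face_for[OF nonempty] by metis
  then have "(\<Sum>i\<in>G'. face_centre \<F> G $ i) = real (count_below \<F> G')"
    by (simp add: face_for_def)
  moreover have "real (count_below \<F> G') + 1 / real CARD('n) \<le> (\<Sum>i\<in>G'. face_centre \<F> G $ i)"
    using G G' \<open>G \<noteq> G'\<close> building_closure_nonempty[OF nonempty]
    by (intro sum_face_centre_ge[OF nonempty full]) auto
  ultimately show False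
    by simp
qed

lemma face_for_inequality_irredundant:
  fixes \<F> :: "'n::finite set set"
  assumes nonempty: "\<forall>F\<in>\<F>. F \<noteq> {}" and full: "UNIV \<in> \<F>"
    and G0: "G0 \<in> building_closure \<F>" "G0 \<noteq> UNIV"
  shows "\<exists>x::real^'n. (\<Sum>i\<in>UNIV. x $ i) = real (card \<F>)
    \<and> (\<forall>G \<in> building_closure \<F> - {UNIV, G0}. (\<Sum>i\<in>G. x $ i) \<ge> real (count_below \<F> G))
    \<and> x \<notin> minkowski_simplex \<F>"
proof -
  let ?y = "face_centre \<F> G0"
  define e :: real where "e = 1 / real CARD('n)"
  obtain g h where "g \<in> G0" "h \<notin> G0"
    using building_closure_nonempty[OF nonempty G0(1)] G0(2) by blast
  define x where "x = ?y + e *\<^sub>R (axis h 1 - axis g 1)"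
  have sum_x: "(\<Sum>i\<in>H. x $ i) = (\<Sum>i\<in>H. ?y $ i) + e * ((if h \<in> H then 1 else 0) - (if g \<in> H then 1 else 0))"
    for H
    by (simp add: x_def axis_def sum.distrib sum_subtractf flip: sum_distrib_left)
  have "0 < e"
    by (simp add: e_def)
  then have shift_ge: "(\<Sum>i\<in>H. ?y $ i) - e \<le> (\<Sum>i\<in>H. x $ i)" for H
    unfolding sum_x by auto
  have y: "?y \<in> face_for \<F> G0"
    using nonempty by (rule face_centre_in_face_for)
  have "(\<Sum>i\<in>UNIV. x $ i) = real (card \<F>)"
    using y sum_x[of UNIV] by (simp add: face_for_def sum_components_minkowski_simplex)
  moreover have "(\<Sum>i\<in>G. x $ i) \<ge> real (count_below \<F> G)" if "G \<in> building_closure \<F> - {UNIV, G0}" for G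
    using sum_face_centre_ge[OF nonempty full G0, of G] that building_closure_nonempty[OF nonempty]
      shift_ge[of G] by (auto simp: e_def)
  moreover have "(\<Sum>i\<in>G0. x $ i) < real (count_below \<F> G0)"
    using y sum_x[of G0] \<open>g \<in> G0\<close> \<open>h \<notin> G0\<close> by (simp add: face_for_def e_def)
  then have "x \<notin> minkowski_simplex \<F>"
    using count_below_le_sum_components[of x \<F> G0] by linarith
  ultimately show ?thesis
    by blast
qed

lemma inner_simplexF_less:
  assumes "y \<in> simplexF F" "\<forall>k. a $ k \<le> M" "0 < y $ i" "a $ i < M"
  shows "a \<bullet> y < M"
proof -
  have "0 < (M - a $ i) * y $ i"
    using assms(3,4) by simp
  also have "\<dots> \<le> (\<Sum>k\<in>UNIV. (M - a $ k) * y $ k)"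
    using assms(1,2) by (intro member_le_sum mult_nonneg_nonneg) (auto intro: simplexF_nonneg)
  also have "\<dots> = M * (\<Sum>k\<in>UNIV. y $ k) - a \<bullet> y"
    by (simp add: inner_vec_def left_diff_distrib sum_subtractf sum_distrib_left)
  also have "\<dots> = M - a \<bullet> y"
    using assms(1) by (simp add: simplexF_iff)
  finally show ?thesis
    by simp
qed

lemma summand_of_maximizer_vanishes:
  fixes \<F> :: "'n::finite set set"
  assumes p: "\<forall>F\<in>\<F>. p F \<in> simplexF F"
    and max: "\<forall>y\<in>minkowski_simplex \<F>. a \<bullet> y \<le> a \<bullet> (\<Sum>F\<in>\<F>. p F)"
    and "\<forall>k. a $ k \<le> M" "F \<in> \<F>" "u \<in> F" "a $ u = M" "a $ i < M"
  shows "p F $ i = 0"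
  \<comment> \<open>otherwise moving all of \<open>p F\<close> to the coordinate \<open>u\<close> would increase the value of \<open>a\<close>\<close>
proof (rule ccontr)
  let ?x = "\<Sum>F\<in>\<F>. p F"
  let ?y = "\<Sum>G\<in>\<F>. (p(F := axis u 1)) G"
  have pF: "p F \<in> simplexF F"
    using p \<open>F \<in> \<F>\<close> by blast
  assume "p F $ i \<noteq> 0"
  with simplexF_nonneg[OF pF, of i] have "0 < p F $ i"
    by linarith
  with assms(3,7) have less: "a \<bullet> p F < M"
    using inner_simplexF_less[OF pF] by simp
  have "?y - ?x = axis u 1 - p F"
    by (rule sum_update_diff[OF finite \<open>F \<in> \<F>\<close>])
  then have "a \<bullet> ?y = a \<bullet> (axis u 1 - p F) + a \<bullet> ?x"
    by (metis eq_diff_eq inner_add_right)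
  also have "a \<bullet> (axis u 1 - p F) = M - a \<bullet> p F"
    using \<open>a $ u = M\<close> by (simp add: inner_diff_right inner_axis)
  finally have "a \<bullet> ?x < a \<bullet> ?y"
    using less by linarith
  moreover have "?y \<in> minkowski_simplex \<F>"
    using p \<open>u \<in> F\<close> by (intro sum_in_minkowski_simplex) (simp add: axis_in_simplexF_iff)
  ultimately show False
    using max by fastforce
qed

lemma maximizer_in_face_for:
  fixes \<F> :: "'n::finite set set"
  assumes "\<forall>i. a $ i \<le> M" "x \<in> minkowski_simplex \<F>"
    and max: "\<forall>y\<in>minkowski_simplex \<F>. a \<bullet> y \<le> a \<bullet> x"
  shows "x \<in> face_for \<F> {i. a $ i < M}"
proof -
  let ?L = "{i. a $ i < M}"
  obtain p where p: "\<forall>F\<in>\<F>. p F \<in> simplexF F" and x: "x = (\<Sum>F\<in>\<F>. p F)"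
    using assms(2) by (rule minkowski_simplexE)
  have "p F \<in> simplexF (face_support ?L F)" if F: "F \<in> \<F>" for F
  proof (cases "F \<subseteq> ?L")
    case True
    then show ?thesis
      using p F by (simp add: face_support_def)
  next
    case False
    then obtain u where "u \<in> F" "\<not> a $ u < M"
      by blast
    moreover have "a $ u \<le> M"
      using assms(1) by blast
    ultimately have "p F $ i = 0" if "i \<in> ?L" for i
      using summand_of_maximizer_vanishes[OF p max[unfolded x] assms(1) F, of u i] that by simp
    moreover have "p F \<in> simplexF F"
      using p F by blast
    ultimately have "p F \<in> simplexF (F - ?L)"
      unfolding simplexF_iff by blast
    with False show ?thesis
      by (simp add: face_support_def)
  qed
  then show ?thesis
    unfolding x by (intro sum_in_face_for) blast
qed

lemma building_closure_component:
  assumes "finite L" "i \<in> L"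
  obtains G where "G \<in> building_closure \<F>" "i \<in> G" "G \<subseteq> L"
    "\<And>F. F \<in> \<F> \<Longrightarrow> F \<subseteq> L \<Longrightarrow> F \<inter> G \<noteq> {} \<Longrightarrow> F \<subseteq> G"
proof -
  define \<H> where "\<H> = {H \<in> building_closure \<F>. i \<in> H \<and> H \<subseteq> L}"
  have "{i} \<in> \<H>"
    using assms(2) by (auto simp: \<H>_def intro: building_closure.single)
  moreover have "finite \<H>"
    using assms(1) by (auto simp: \<H>_def intro: finite_subset[of _ "Pow L"])
  ultimately have closure: "\<Union>\<H> \<in> building_closure \<F>"
    by (intro building_closure_Union[where c = i]) (auto simp: \<H>_def)
  have "F \<subseteq> \<Union>\<H>" if "F \<in> \<F>" "F \<subseteq> L" "F \<inter> \<Union>\<H> \<noteq> {}" for F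
  proof -
    have "F \<union> \<Union>\<H> \<in> building_closure \<F>"
      by (rule building_closure.union[OF building_closure.base[OF that(1)] closure that(3)])
    then have "F \<union> \<Union>\<H> \<in> \<H>"
      using that \<open>{i} \<in> \<H>\<close> by (auto simp: \<H>_def)
    then show ?thesis
      by blast
  qed
  moreover have "i \<in> \<Union>\<H>" "\<Union>\<H> \<subseteq> L"
    using \<open>{i} \<in> \<H>\<close> by (auto simp: \<H>_def)
  ultimately show ?thesis
    using that closure by blast
qed

lemma face_for_subset_component:
  fixes \<F> :: "'n::finite set set"
  assumes nonempty: "\<forall>F\<in>\<F>. F \<noteq> {}" and "G \<subseteq> L"
    and component: "\<And>F. F \<in> \<F> \<Longrightarrow> F \<subseteq> L \<Longrightarrow> F \<inter> G \<noteq> {} \<Longrightarrow> F \<subseteq> G"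
  shows "face_for \<F> L \<subseteq> face_for \<F> G"
proof
  fix x assume x: "x \<in> face_for \<F> L"
  then have S: "x \<in> minkowski_simplex \<F>"
    by (simp add: face_for_def)
  have "{F\<in>\<F>. F \<subseteq> L} = {F\<in>\<F>. F \<subseteq> G} \<union> {F\<in>\<F>. F \<subseteq> L - G}"
    using component \<open>G \<subseteq> L\<close> by blast
  moreover have "{F\<in>\<F>. F \<subseteq> G} \<inter> {F\<in>\<F>. F \<subseteq> L - G} = {}"
    using nonempty by blast
  ultimately have "count_below \<F> L = count_below \<F> G + count_below \<F> (L - G)"
    unfolding count_below_def by (simp add: card_Un_disjoint)
  moreover have "(\<Sum>i\<in>L. x $ i) = (\<Sum>i\<in>L - G. x $ i) + (\<Sum>i\<in>G. x $ i)"
    using \<open>G \<subseteq> L\<close> by (simp add: sum.subset_diff)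
  moreover note count_below_le_sum_components[OF S, of G] count_below_le_sum_components[OF S, of "L - G"]
  ultimately have "(\<Sum>i\<in>G. x $ i) = real (count_below \<F> G)"
    using x by (simp add: face_for_def)
  with S show "x \<in> face_for \<F> G"
    by (simp add: face_for_def)
qed

lemma facet_of_subset_eq:
  assumes "P facet_of S" "Q facet_of S" "P \<subseteq> Q"
  shows "P = Q"
proof (rule ccontr)
  assume "P \<noteq> Q"
  have "P face_of Q"
    using assms by (meson face_of_subset facet_of_imp_face_of facet_of_imp_subset)
  then have "aff_dim P < aff_dim Q"
    using \<open>P \<noteq> Q\<close> face_of_imp_convex[OF facet_of_imp_face_of[OF assms(2)]] face_of_aff_dim_lt by blast
  with assms(1,2) show False
    by (simp add: facet_of_def)
qed

lemma facet_of_minkowski_simplex_subset_face_for: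
  fixes \<F> :: "'n::finite set set"
  assumes P: "P facet_of minkowski_simplex \<F>"
  obtains L where "L \<noteq> {}" "L \<noteq> UNIV" "P \<subseteq> face_for \<F> L"
proof -
  let ?S = "minkowski_simplex \<F>"
  have "P exposed_face_of ?S"
    using exposed_face_of_polyhedron[OF polytope_imp_polyhedron[OF polytope_minkowski_simplex]]
      facet_of_imp_face_of[OF P] by blast
  then obtain a b where ab: "?S \<subseteq> {x. a \<bullet> x \<le> b}" "P = ?S \<inter> {x. a \<bullet> x = b}"
    unfolding exposed_face_of_def by blast
  define M where "M = Max (range (($) a))"
  have aM: "\<forall>i. a $ i \<le> M"
    by (simp add: M_def)
  obtain iM where "a $ iM = M"
    unfolding M_def by (metis (mono_tags) Max_in finite_imageI finite imageE UNIV_not_empty image_is_empty)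
  then have not_UNIV: "{i. a $ i < M} \<noteq> UNIV"
    by auto
  have sub: "P \<subseteq> face_for \<F> {i. a $ i < M}"
    using ab aM by (auto intro!: maximizer_in_face_for)
  have "{i. a $ i < M} \<noteq> {}"
  proof
    assume "{i. a $ i < M} = {}"
    with aM have "a = M *\<^sub>R indicator_vector UNIV"
      by (auto simp: vec_eq_iff indicator_vector_def not_less intro: antisym)
    then have const: "a \<bullet> x = M * real (card \<F>)" if "x \<in> ?S" for x
      using that by (simp add: inner_indicator_vector sum_components_minkowski_simplex)
    obtain y where "y \<in> P"
      using P by (auto simp: facet_of_def)
    then have "P = ?S"
      using ab const by auto
    with P show False
      by simp
  qed
  then show ?thesis
    using not_UNIV sub by (rule that)
qed

lemma facet_of_minkowski_simplex_eq_face_for: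
  fixes \<F> :: "'n::finite set set"
  assumes nonempty: "\<forall>F\<in>\<F>. F \<noteq> {}" and full: "UNIV \<in> \<F>"
    and P: "P facet_of minkowski_simplex \<F>"
  shows "\<exists>G \<in> building_closure \<F> - {UNIV}. P = face_for \<F> G"
proof -
  obtain L where "L \<noteq> {}" "L \<noteq> UNIV" and PL: "P \<subseteq> face_for \<F> L"
    using P by (rule facet_of_minkowski_simplex_subset_face_for)
  then obtain i where "i \<in> L"
    by blast
  then obtain G where G: "G \<in> building_closure \<F>" "G \<subseteq> L"
    and component: "\<And>F. F \<in> \<F> \<Longrightarrow> F \<subseteq> L \<Longrightarrow> F \<inter> G \<noteq> {} \<Longrightarrow> F \<subseteq> G"
    by (rule building_closure_component[OF finite]) blast
  have "G \<noteq> UNIV"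
    using G(2) \<open>L \<noteq> UNIV\<close> by blast
  have "P \<subseteq> face_for \<F> G"
    using PL face_for_subset_component[OF nonempty G(2) component] by blast
  then have "P = face_for \<F> G"
    by (rule facet_of_subset_eq[OF P face_for_facet_of[OF nonempty full G(1) \<open>G \<noteq> UNIV\<close>]])
  with G(1) \<open>G \<noteq> UNIV\<close> show ?thesis
    by blast
qed

theorem corollary3p13:
  fixes \<F> :: "'n::finite set set"
  assumes nonempty: "\<forall>F\<in>\<F>. F \<noteq> {}"
    and full: "UNIV \<in> \<F>"
  shows "aff_dim (minkowski_simplex \<F>) = int CARD('n) - 1
    \<and> (\<forall>G \<in> building_closure \<F> - {UNIV}. face_for \<F> G facet_of minkowski_simplex \<F>)
    \<and> inj_on (face_for \<F>) (building_closure \<F> - {UNIV})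
    \<and> (\<forall>P. P facet_of minkowski_simplex \<F> \<longrightarrow>
           (\<exists>G \<in> building_closure \<F> - {UNIV}. P = face_for \<F> G))
    \<and> (\<forall>G0 \<in> building_closure \<F> - {UNIV}. \<exists>x::real^'n.
           (\<Sum>i\<in>UNIV. x $ i) = real (card \<F>)
         \<and> (\<forall>G \<in> building_closure \<F> - {UNIV, G0}. (\<Sum>i\<in>G. x $ i) \<ge> real (count_below \<F> G))
         \<and> x \<notin> minkowski_simplex \<F>)"
  using aff_dim_minkowski_simplex[OF nonempty full] face_for_facet_of[OF nonempty full]
    inj_on_face_for[OF nonempty full] facet_of_minkowski_simplex_eq_face_for[OF nonempty full]
    face_for_inequality_irredundant[OF nonempty full]
  by blast

end
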